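(* For $n\ge1$, let $X_n$ be the set of planar rooted trees with $n$ leaves having no vertices with exactly one or exactly two inputs, in which every vertex with $k$ inputs is labelled by an element of $\{1,\dots,k-2\}$. Then $\#X_n=F_{n-1}$, where the Fine numbers $F_k$ are defined by $\sum_{n\ge1}F_{n-1}x^n=\frac{1+2x-\sqrt{1-4x}}{2(2+x)}$.
   Context: For $n=1$, $X_1$ consists of the trivial tree (one leaf, no vertex). *)

theory Defs
  imports Complex_Main
begin

text \<open>Planar rooted trees: a leaf, or a vertex carrying a label and an ordered list of input subtrees.\<close>
datatype ptree = Leaf | Node nat "ptree list"

fun leaves :: "ptree \<Rightarrow> nat" where
  "leaves Leaf = 1"
| "leaves (Node l ts) = sum_list (map leaves ts)"

fun admissible :: "ptree \<Rightarrow> bool" where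
  "admissible Leaf = True"
| "admissible (Node l ts) =
     (length ts \<noteq> 1 \<and> length ts \<noteq> 2 \<and> l \<in> {1..int (length ts) - 2} \<and> (\<forall>t\<in>set ts. admissible t))"

definition X :: "nat \<Rightarrow> ptree set" where
  "X n = {t. admissible t \<and> leaves t = n}"

definition fine_gf :: "real \<Rightarrow> real" where
  "fine_gf x = (1 + 2 * x - sqrt (1 - 4 * x)) / (2 * (2 + x))"

end

theory Submission
  imports Defs "HOL-Analysis.FPS_Convergence" "HOL-Analysis.Generalised_Binomial_Theorem"
begin

(* A tree in X is a leaf or a root with k >= 3 inputs, one of k - 2 labels and a k-tuple of
   trees in X. So the generating series A = sum_n #X_n x^n satisfies
   A = x + sum_{k>=3} (k - 2) A^k = x + A^3 / (1 - A)^2, i.e. (2 + x) A^2 - (1 + 2x) A + x = 0.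
   This quadratic has exactly one formal power series root with zero constant term, and the
   Taylor series of (1 + 2x - sqrt (1 - 4x)) / (2 (2 + x)) is such a root; being the expansion
   of a function analytic at 0, it converges to that function near 0. *)

lemma length_le_sum_list:
  fixes f :: "'a \<Rightarrow> nat"
  assumes "\<forall>x\<in>set xs. 0 < f x"
  shows "length xs \<le> sum_list (map f xs)"
  using assms by (induction xs) auto

lemma member_less_sum_list:
  fixes f :: "'a \<Rightarrow> nat"
  assumes x: "x \<in> set xs" and pos: "\<forall>y\<in>set xs. 0 < f y" and len: "2 \<le> length xs"
  shows "f x < sum_list (map f xs)"
proof -
  have "length (remove1 x xs) \<le> sum_list (map f (remove1 x xs))"
    using pos set_remove1_subset by (intro length_le_sum_list) fast
  moreover have "length (remove1 x xs) = length xs - 1"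
    using x by (simp add: length_remove1)
  ultimately show ?thesis
    using x len sum_list_map_remove1[OF x, of f] by linarith
qed

lemma admissible_Node_iff:
  "admissible (Node l ts) \<longleftrightarrow> l \<in> {1..length ts - 2} \<and> (\<forall>t\<in>set ts. admissible t)"
  by auto

lemma leaves_pos: "admissible t \<Longrightarrow> 0 < leaves t"
proof (induction t)
  case (Node l ts)
  then obtain t where t: "t \<in> set ts" and "admissible t"
    by (cases ts) (auto simp: admissible_Node_iff)
  then have "0 < leaves t"
    using Node.IH by blast
  also have "leaves t \<le> leaves (Node l ts)"
    using t by (simp add: member_le_sum_list)
  finally show ?case .
qed simp

lemma X_0: "X 0 = {}"
  using leaves_pos by (fastforce simp: X_def)

lemma finite_X: "finite (X n)"
proof (induction n rule: less_induct)
  case (less n)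
  let ?Trees = "\<Union>m<n. X m"
  let ?Nodes = "(\<lambda>(l, ts). Node l ts) ` ({..n} \<times> {ts. set ts \<subseteq> ?Trees \<and> length ts \<le> n})"
  have "X n \<subseteq> insert Leaf ?Nodes"
  proof
    fix t assume "t \<in> X n"
    show "t \<in> insert Leaf ?Nodes"
    proof (cases t)
      case (Node l ts)
      with \<open>t \<in> X n\<close> have adm: "l \<in> {1..length ts - 2}" "\<forall>s\<in>set ts. admissible s"
        and n: "sum_list (map leaves ts) = n"
        by (auto simp: X_def admissible_Node_iff)
      have pos: "\<forall>s\<in>set ts. 0 < leaves s"
        using adm(2) leaves_pos by blast
      have "set ts \<subseteq> ?Trees"
        using member_less_sum_list[OF _ pos] adm n by (force simp: X_def)
      moreover have "length ts \<le> n"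
        using length_le_sum_list[OF pos] n by simp
      ultimately show ?thesis
        using Node adm by force
    qed simp
  qed
  moreover have "finite ?Trees"
    using less by blast
  then have "finite (insert Leaf ?Nodes)"
    by (intro finite.insertI finite_imageI finite_cartesian_product finite_lists_length_le) auto
  ultimately show ?case
    by (rule finite_subset)
qed

definition forests :: "nat \<Rightarrow> nat \<Rightarrow> ptree list set" where
  "forests k n = {ts. length ts = k \<and> (\<forall>t\<in>set ts. admissible t) \<and> sum_list (map leaves ts) = n}"

lemma finite_forests: "finite (forests k n)"
proof -
  have "forests k n \<subseteq> {ts. set ts \<subseteq> (\<Union>m\<le>n. X m) \<and> length ts = k}"
  proof (rule subsetI, intro CollectI conjI)
    fix ts assume ts: "ts \<in> forests k n"
    then show "length ts = k"
      by (simp add: forests_def)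
    show "set ts \<subseteq> (\<Union>m\<le>n. X m)"
    proof
      fix t assume "t \<in> set ts"
      then have "leaves t \<le> n" and "admissible t"
        using ts member_le_sum_list[of "leaves t" "map leaves ts"] by (auto simp: forests_def)
      then show "t \<in> (\<Union>m\<le>n. X m)"
        by (auto simp: X_def)
    qed
  qed
  moreover have "finite {ts. set ts \<subseteq> (\<Union>m\<le>n. X m) \<and> length ts = k}"
    using finite_X by (intro finite_lists_length_eq) auto
  ultimately show ?thesis
    by (rule finite_subset)
qed

lemma forests_0: "forests 0 n = (if n = 0 then {[]} else {})"
  by (auto simp: forests_def)

lemma forests_Suc:
  "forests (Suc k) n = (\<Union>i\<le>n. (\<lambda>(t, ts). t # ts) ` (X i \<times> forests k (n - i)))"
proof (intro equalityI subsetI)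
  fix ts assume "ts \<in> forests (Suc k) n"
  then obtain t ts' where "ts = t # ts'" "t \<in> X (leaves t)" "ts' \<in> forests k (n - leaves t)"
    "leaves t \<le> n"
    by (cases ts) (auto simp: forests_def X_def)
  then show "ts \<in> (\<Union>i\<le>n. (\<lambda>(t, ts). t # ts) ` (X i \<times> forests k (n - i)))"
    by blast
qed (auto simp: forests_def X_def)

lemma card_forests_Suc:
  "card (forests (Suc k) n) = (\<Sum>i\<le>n. card (X i) * card (forests k (n - i)))"
proof -
  have "card (forests (Suc k) n) = (\<Sum>i\<le>n. card ((\<lambda>(t, ts). t # ts) ` (X i \<times> forests k (n - i))))"
    unfolding forests_Suc
  proof (rule card_UN_disjoint)
    show "\<forall>i\<in>{..n}. finite ((\<lambda>(t, ts). t # ts) ` (X i \<times> forests k (n - i)))"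
      by (simp add: finite_X finite_forests)
  qed (auto simp: X_def)
  also have "\<dots> = (\<Sum>i\<le>n. card (X i) * card (forests k (n - i)))"
    by (subst card_image) (auto simp: inj_on_def card_cartesian_product)
  finally show ?thesis .
qed

(* For k <= 2 the label range {1..k - 2} is empty, so only roots with k >= 3 inputs occur. *)
lemma X_eq:
  "X n = (if n = 1 then {Leaf} else {}) \<union>
     (\<Union>k\<le>n. (\<lambda>(l, ts). Node l ts) ` ({1..k - 2} \<times> forests k n))"
proof (intro equalityI subsetI)
  fix t assume t: "t \<in> X n"
  show "t \<in> (if n = 1 then {Leaf} else {}) \<union>
     (\<Union>k\<le>n. (\<lambda>(l, ts). Node l ts) ` ({1..k - 2} \<times> forests k n))"
  proof (cases t)
    case (Node l ts)
    with t have l: "l \<in> {1..length ts - 2}" and ts: "ts \<in> forests (length ts) n"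
      by (auto simp: X_def forests_def admissible_Node_iff simp del: admissible.simps(2))
    then have "length ts \<le> n"
      using length_le_sum_list[of ts leaves] leaves_pos by (auto simp: forests_def)
    with l ts show ?thesis
      unfolding Node by blast
  qed (use t in \<open>simp add: X_def\<close>)
next
  fix t assume "t \<in> (if n = 1 then {Leaf} else {}) \<union>
     (\<Union>k\<le>n. (\<lambda>(l, ts). Node l ts) ` ({1..k - 2} \<times> forests k n))"
  then show "t \<in> X n"
    by (auto simp: X_def forests_def admissible_Node_iff simp del: admissible.simps(2) split: if_splits)
qed

lemma card_X: "card (X n) = of_bool (n = 1) + (\<Sum>k\<le>n. (k - 2) * card (forests k n))"
proof -
  let ?node = "\<lambda>(l, ts). Node l ts"
  have "card (\<Union>k\<le>n. ?node ` ({1..k - 2} \<times> forests k n)) =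
      (\<Sum>k\<le>n. card (?node ` ({1..k - 2} \<times> forests k n)))"
  proof (rule card_UN_disjoint)
    show "\<forall>k\<in>{..n}. finite (?node ` ({1..k - 2} \<times> forests k n))"
      by (simp add: finite_forests)
  qed (auto simp: forests_def)
  also have "\<dots> = (\<Sum>k\<le>n. (k - 2) * card (forests k n))"
    by (subst card_image) (auto simp: inj_on_def card_cartesian_product)
  finally show ?thesis
    by (subst X_eq, subst card_Un_disjoint) (auto simp: finite_forests)
qed

definition tree_fps :: "real fps" where
  "tree_fps = Abs_fps (\<lambda>n. of_nat (card (X n)))"

lemma tree_fps_nth: "fps_nth tree_fps n = of_nat (card (X n))"
  by (simp add: tree_fps_def)

lemma tree_fps_nth_0: "fps_nth tree_fps 0 = 0"
  by (simp add: tree_fps_nth X_0)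

lemma tree_fps_power: "tree_fps ^ k = Abs_fps (\<lambda>n. of_nat (card (forests k n)))"
proof (induction k)
  case 0
  show ?case
    by (simp add: forests_0 fps_eq_iff)
next
  case (Suc k)
  show ?case
  proof (rule fps_ext)
    fix n
    have "fps_nth (tree_fps ^ Suc k) n = (\<Sum>i=0..n. fps_nth tree_fps i * fps_nth (tree_fps ^ k) (n - i))"
      by (simp add: fps_mult_nth)
    also have "\<dots> = of_nat (card (forests (Suc k) n))"
      by (simp add: Suc.IH tree_fps_nth card_forests_Suc atLeast0AtMost)
    finally show "fps_nth (tree_fps ^ Suc k) n = fps_nth (Abs_fps (\<lambda>n. of_nat (card (forests (Suc k) n)))) n"
      by simp
  qed
qed

(* Coefficient k counts the labels of a vertex with k inputs. *)
definition label_fps :: "'a::comm_ring_1 fps" where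
  "label_fps = Abs_fps (\<lambda>k. of_nat (k - 2))"

lemma label_fps_mult: "(1 - fps_X) ^ 2 * label_fps = (fps_X ^ 3 :: 'a::comm_ring_1 fps)"
proof -
  have "(1 - fps_X) * label_fps = Abs_fps (\<lambda>k. of_bool (3 \<le> k) :: 'a)"
    by (rule fps_ext) (auto simp: label_fps_def algebra_simps of_nat_diff)
  moreover have "(1 - fps_X) * Abs_fps (\<lambda>k. of_bool (3 \<le> k)) = (fps_X ^ 3 :: 'a fps)"
    by (rule fps_ext) (auto simp: algebra_simps fps_X_power_nth)
  ultimately show ?thesis
    by (simp add: power2_eq_square mult.assoc)
qed

lemma tree_fps_functional_eq: "tree_fps = fps_X + (label_fps oo tree_fps)"
proof (rule fps_ext)
  fix n
  have "fps_nth (label_fps oo tree_fps) n = (\<Sum>k\<le>n. of_nat ((k - 2) * card (forests k n)))"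
    by (simp add: fps_compose_nth label_fps_def tree_fps_power atLeast0AtMost)
  then show "fps_nth tree_fps n = fps_nth (fps_X + (label_fps oo tree_fps)) n"
    by (simp add: tree_fps_nth card_X fps_X_nth)
qed

lemma tree_fps_quadratic:
  "(2 + fps_X) * tree_fps ^ 2 - (1 + 2 * fps_X) * tree_fps + fps_X = 0"
proof -
  have "((1 - fps_X) ^ 2 * label_fps) oo tree_fps = fps_X ^ 3 oo tree_fps"
    by (simp add: label_fps_mult)
  then have "(1 - tree_fps) ^ 2 * (label_fps oo tree_fps) = tree_fps ^ 3"
    by (simp add: fps_compose_mult_distrib fps_compose_power[symmetric] fps_compose_sub_distrib
        tree_fps_nth_0)
  moreover have "label_fps oo tree_fps = tree_fps - fps_X"
    using tree_fps_functional_eq by (metis add_diff_cancel_left')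
  ultimately have "(1 - tree_fps) ^ 2 * (tree_fps - fps_X) = tree_fps ^ 3"
    by simp
  then show ?thesis
    by (simp add: algebra_simps power2_eq_square power3_eq_cube)
qed

lemma fine_quadratic_root_unique:
  fixes a b :: "'a::field fps"
  assumes "(2 + fps_X) * a ^ 2 - (1 + 2 * fps_X) * a + fps_X = 0" "fps_nth a 0 = 0"
    and "(2 + fps_X) * b ^ 2 - (1 + 2 * fps_X) * b + fps_X = 0" "fps_nth b 0 = 0"
  shows "a = b"
proof -
  let ?c = "(2 + fps_X) * (a + b) - (1 + 2 * fps_X)"
  have "(a - b) * ?c =
      ((2 + fps_X) * a ^ 2 - (1 + 2 * fps_X) * a + fps_X) -
      ((2 + fps_X) * b ^ 2 - (1 + 2 * fps_X) * b + fps_X)"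
    by (simp add: algebra_simps power2_eq_square)
  also have "\<dots> = 0"
    using assms by simp
  finally have "(a - b) * ?c = 0" .
  moreover have "?c \<noteq> 0"
  proof
    assume "?c = 0"
    then have "fps_nth ?c 0 = 0"
      by simp
    with assms show False
      by simp
  qed
  ultimately show ?thesis
    by simp
qed

definition sqrt_fps :: "real fps" where
  "sqrt_fps = fps_binomial (1/2) oo (fps_const (-4) * fps_X)"

lemma sqrt_fps_nth: "fps_nth sqrt_fps n = (-4) ^ n * ((1/2) gchoose n)"
  by (simp add: sqrt_fps_def)

lemma sqrt_fps_squared: "sqrt_fps ^ 2 = 1 - 4 * fps_X"
proof -
  have X: "fps_nth (fps_const (-4 :: real) * fps_X) 0 = 0"
    by simp
  have "sqrt_fps ^ 2 = fps_binomial (1/2) ^ 2 oo (fps_const (-4) * fps_X)"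
    unfolding sqrt_fps_def by (rule fps_compose_power[OF X])
  also have "fps_binomial (1/2 :: real) ^ 2 = 1 + fps_X"
    by (simp add: fps_binomial_power fps_binomial_1)
  also have "(1 + fps_X) oo (fps_const (-4) * fps_X) = 1 + fps_const (-4 :: real) * fps_X"
    by (simp add: fps_compose_add_distrib X)
  finally show ?thesis
    by (simp add: numeral_fps_const)
qed

definition fine_fps :: "real fps" where
  "fine_fps = (1 + 2 * fps_X - sqrt_fps) * inverse (2 * (2 + fps_X))"

lemma fine_fps_nth_0: "fps_nth fine_fps 0 = 0"
  by (simp add: fine_fps_def sqrt_fps_nth)

lemma fine_fps_quadratic:
  "(2 + fps_X) * fine_fps ^ 2 - (1 + 2 * fps_X) * fine_fps + fps_X = 0"
proof -
  let ?d = "2 * (2 + fps_X) :: real fps" and ?n = "1 + 2 * fps_X - sqrt_fps"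
  have d0: "fps_nth ?d 0 \<noteq> 0"
    by simp
  then have fine_d: "fine_fps * ?d = ?n"
    by (simp add: fine_fps_def inverse_mult_eq_1 mult.assoc)
  have "?d ^ 2 * ((2 + fps_X) * fine_fps ^ 2 - (1 + 2 * fps_X) * fine_fps + fps_X) =
      (2 + fps_X) * (fine_fps * ?d) ^ 2 - (1 + 2 * fps_X) * (fine_fps * ?d) * ?d + fps_X * ?d ^ 2"
    by (simp add: algebra_simps power2_eq_square)
  also have "\<dots> = (2 + fps_X) * ?n ^ 2 - (1 + 2 * fps_X) * ?n * ?d + fps_X * ?d ^ 2"
    by (simp only: fine_d)
  also have "\<dots> = (2 + fps_X) * (sqrt_fps ^ 2 - (1 - 4 * fps_X))"
    by (simp add: algebra_simps power2_eq_square)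
  also have "\<dots> = 0"
    by (simp add: sqrt_fps_squared)
  finally show ?thesis
    using d0 by auto
qed

lemma tree_fps_eq_fine_fps: "tree_fps = fine_fps"
  using tree_fps_quadratic tree_fps_nth_0 fine_fps_quadratic fine_fps_nth_0
  by (rule fine_quadratic_root_unique)

lemma has_fps_expansion_imp_sums:
  fixes F :: "'a::{banach, real_normed_div_algebra} fps"
  assumes "f has_fps_expansion F"
  shows "\<exists>r>0. \<forall>z. norm z < r \<longrightarrow> (\<lambda>n. fps_nth F n * z ^ n) sums f z"
proof -
  have "eventually (\<lambda>z. z \<in> eball 0 (fps_conv_radius F)) (nhds 0)"
    using assms by (intro eventually_nhds_in_open) (auto simp: has_fps_expansion_def zero_ereal_def)
  moreover have "eventually (\<lambda>z. eval_fps F z = f z) (nhds 0)"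
    using assms by (simp add: has_fps_expansion_def)
  ultimately have "eventually (\<lambda>z. (\<lambda>n. fps_nth F n * z ^ n) sums f z) (nhds 0)"
  proof eventually_elim
    case (elim z)
    then show ?case
      using sums_eval_fps[of z F] by simp
  qed
  then show ?thesis
    by (simp add: eventually_nhds_metric dist_norm)
qed

lemma fps_conv_radius_sqrt_fps: "fps_conv_radius sqrt_fps = ereal (1/4)"
proof -
  have "(1/2 :: real) \<notin> \<nat>"
  proof
    assume "(1/2 :: real) \<in> \<nat>"
    then obtain m where "(1/2 :: real) = of_nat m"
      by (auto elim: Nats_cases)
    then have "2 * m = 1"
      by linarith
    then show False
      by presburger
  qed
  then have "conv_radius (\<lambda>n. (1/2 :: real) gchoose n) = 1"
    by (simp add: conv_radius_gchoose)
  then have "conv_radius (\<lambda>n. (-4 :: real) ^ n * ((1/2) gchoose n)) = ereal (1/4)"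
    by (subst conv_radius_mult_power) (simp_all add: one_ereal_def)
  then show ?thesis
    by (simp add: fps_conv_radius_def sqrt_fps_nth)
qed

lemma sqrt_has_fps_expansion: "(\<lambda>x. sqrt (1 - 4 * x)) has_fps_expansion sqrt_fps"
  unfolding has_fps_expansion_def
proof
  show "0 < fps_conv_radius sqrt_fps"
    by (simp add: fps_conv_radius_sqrt_fps zero_ereal_def)
  have "eventually (\<lambda>x. x \<in> ball 0 (1/4)) (nhds (0 :: real))"
    by (intro eventually_nhds_in_open) auto
  then show "eventually (\<lambda>x. eval_fps sqrt_fps x = sqrt (1 - 4 * x)) (nhds 0)"
  proof eventually_elim
    case (elim x)
    have "(\<lambda>n. fps_nth sqrt_fps n * x ^ n) = (\<lambda>n. ((1/2) gchoose n) * (-4 * x) ^ n)"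
      by (simp only: sqrt_fps_nth power_mult_distrib mult_ac)
    moreover have "(\<lambda>n. ((1/2) gchoose n) * (-4 * x) ^ n) sums sqrt (1 + -4 * x)"
      using elim by (intro sqrt_series) simp
    ultimately show ?case
      by (simp add: eval_fps_def sums_iff)
  qed
qed

lemma fine_gf_has_fps_expansion: "fine_gf has_fps_expansion fine_fps"
proof -
  have "(\<lambda>x. (1 + 2 * x - sqrt (1 - 4 * x)) * inverse (2 * (2 + x))) has_fps_expansion fine_fps"
    unfolding fine_fps_def by (intro fps_expansion_intros sqrt_has_fps_expansion) simp
  moreover have "fine_gf = (\<lambda>x. (1 + 2 * x - sqrt (1 - 4 * x)) * inverse (2 * (2 + x)))"
    by (simp add: fun_eq_iff fine_gf_def divide_inverse)
  ultimately show ?thesis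
    by simp
qed

theorem corollary2p4:
  shows "\<exists>r>0. \<forall>x::real. \<bar>x\<bar> < r \<longrightarrow>
           (\<lambda>n. real (card (X (Suc n))) * x ^ Suc n) sums fine_gf x"
proof -
  obtain r :: real where "r > 0"
    and sums: "\<And>x. \<bar>x\<bar> < r \<Longrightarrow> (\<lambda>n. fps_nth fine_fps n * x ^ n) sums fine_gf x"
    using has_fps_expansion_imp_sums[OF fine_gf_has_fps_expansion] by auto
  have "(\<lambda>n. real (card (X (Suc n))) * x ^ Suc n) sums fine_gf x" if "\<bar>x\<bar> < r" for x
    using sums[OF that] by (subst sums_Suc_iff) (simp add: tree_fps_eq_fine_fps[symmetric] tree_fps_nth X_0)
  with \<open>r > 0\<close> show ?thesis
    by blast
qed

end
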